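(* Let $T$ be the operator on $H^2$ given by $Tf=\sum_{m=0}^\infty\left(\sum_{n=0}^\infty n!\,\hat f(n+m)\right)z^m$, with domain $D(T)=\{f\in H^2: Tf\in H^2\}$ (i.e. those $f$ for which every inner series converges and the resulting coefficient sequence is square summable). Then every function $f\in D(T)$ is an entire function and can be written as $f(z)=\sum_{n=0}^\infty a_n\frac{z^n}{n!}$ where $\sum_{n=0}^\infty a_n$ converges.
   Context: $H^2$ is the Hardy space of analytic functions $f(z)=\sum_{n\ge0}\hat f(n)z^n$ on the unit disc with $\sum|\hat f(n)|^2<\infty$. *)

theory Defs
  imports "HOL-Complex_Analysis.Complex_Analysis"
begin

definition fhat :: "(complex \<Rightarrow> complex) \<Rightarrow> nat \<Rightarrow> complex" where
  "fhat f n = (deriv ^^ n) f 0 / of_nat (fact n)"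

definition H2 :: "(complex \<Rightarrow> complex) set" where
  "H2 = {f. f holomorphic_on ball 0 1 \<and> summable (\<lambda>n. (norm (fhat f n))^2)}"

definition Tcoeff :: "(complex \<Rightarrow> complex) \<Rightarrow> nat \<Rightarrow> complex" where
  "Tcoeff f m = (\<Sum>n. of_nat (fact n) * fhat f (n + m))"

definition domT :: "(complex \<Rightarrow> complex) set" where
  "domT = {f \<in> H2. (\<forall>m. summable (\<lambda>n. of_nat (fact n) * fhat f (n + m)))
                   \<and> summable (\<lambda>m. (norm (Tcoeff f m))^2)}"

end

theory Submission
  imports Defs
begin

text \<open>Only the inner series of \<open>T f\<close> at \<open>m = 0\<close> is needed: its terms \<open>a n = n! * fhat f n\<close>
  are summable, hence bounded, so \<open>\<Sum> fhat f n * z ^ n = \<Sum> a n * z ^ n / n!\<close> is dominated by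
  a multiple of the exponential series. This power series is therefore entire, and on the unit disc
  it is the Taylor series of \<open>f\<close>.\<close>

lemma summable_power_series_div_fact:
  fixes a :: "nat \<Rightarrow> 'a::{real_normed_field,banach}"
  assumes "Bseq a"
  shows "summable (\<lambda>n. a n * z ^ n / of_nat (fact n))"
proof -
  obtain M where M: "\<And>n. norm (a n) \<le> M"
    using assms by (auto simp: Bseq_def)
  show ?thesis
  proof (rule summable_comparison_test)
    show "summable (\<lambda>n. M * (norm z ^ n / fact n))"
      using summable_exp_generic[of "norm z"] by (intro summable_mult) (simp add: field_simps)
    have "norm (a n * z ^ n / of_nat (fact n)) \<le> M * (norm z ^ n / fact n)" for n
    proof -
      have "norm (a n * z ^ n / of_nat (fact n)) = norm (a n) * norm z ^ n / fact n"
        by (simp add: norm_mult norm_divide norm_power)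
      also have "\<dots> \<le> M * norm z ^ n / fact n"
        by (intro divide_right_mono mult_right_mono M) auto
      finally show ?thesis by simp
    qed
    then show "\<exists>N. \<forall>n\<ge>N. norm (a n * z ^ n / of_nat (fact n)) \<le> M * (norm z ^ n / fact n)"
      by blast
  qed
qed

lemma power_series_holomorphic_UNIV:
  fixes c :: "nat \<Rightarrow> complex"
  assumes "\<And>z. summable (\<lambda>n. c n * z ^ n)"
  shows "(\<lambda>z. \<Sum>n. c n * z ^ n) holomorphic_on UNIV"
  unfolding holomorphic_on_def
proof
  fix z :: complex
  have "(\<lambda>z. \<Sum>n. c n * z ^ n) holomorphic_on ball 0 (norm z + 1)"
    by (rule power_series_holomorphic[where a=c]) (simp add: assms summable_sums)
  then have "(\<lambda>z. \<Sum>n. c n * z ^ n) field_differentiable at z"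
    by (rule holomorphic_on_imp_differentiable_at) auto
  then show "(\<lambda>z. \<Sum>n. c n * z ^ n) field_differentiable at z within UNIV"
    by simp
qed

lemma fhat_power_series_sums:
  assumes "f holomorphic_on ball 0 1" and "z \<in> ball 0 1"
  shows "(\<lambda>n. fhat f n * z ^ n) sums f z"
  using holomorphic_power_series[OF assms] by (simp add: fhat_def)

lemma domT_summable_fact_fhat:
  assumes "f \<in> domT"
  shows "summable (\<lambda>n. of_nat (fact n) * fhat f n)"
proof -
  have "summable (\<lambda>n. of_nat (fact n) * fhat f (n + 0))"
    using assms unfolding domT_def by blast
  then show ?thesis by simp
qed

theorem theorem3:
  assumes "f \<in> domT"
  shows "\<exists>g a. g holomorphic_on UNIV \<and> (\<forall>z\<in>ball 0 1. g z = f z)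
           \<and> summable (a :: nat \<Rightarrow> complex)
           \<and> (\<forall>z. (\<lambda>n. a n * z ^ n / of_nat (fact n)) sums g z)"
proof -
  define a where "a n = of_nat (fact n) * fhat f n" for n
  define g where "g z = (\<Sum>n. fhat f n * z ^ n)" for z
  have a_div_fact: "a n * z ^ n / of_nat (fact n) = fhat f n * z ^ n" for n z
    by (simp add: a_def)
  have "summable a"
    using domT_summable_fact_fhat[OF assms] by (simp add: a_def[abs_def])
  then have "summable (\<lambda>n. fhat f n * z ^ n)" for z
    using summable_power_series_div_fact[OF summable_imp_Bseq, of a z]
    by (simp only: a_div_fact)
  then have g_sums: "(\<lambda>n. fhat f n * z ^ n) sums g z" for z
    by (simp add: g_def summable_sums)
  have "g holomorphic_on UNIV"
    unfolding g_def by (rule power_series_holomorphic_UNIV) (use g_sums sums_summable in blast)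
  moreover have "\<forall>z\<in>ball 0 1. g z = f z"
  proof
    fix z :: complex assume "z \<in> ball 0 1"
    moreover have "f holomorphic_on ball 0 1"
      using assms by (simp add: domT_def H2_def)
    ultimately show "g z = f z"
      using fhat_power_series_sums g_sums sums_unique2 by blast
  qed
  moreover have "(\<lambda>n. a n * z ^ n / of_nat (fact n)) sums g z" for z
    using g_sums by (simp only: a_div_fact)
  ultimately show ?thesis
    using \<open>summable a\<close> by blast
qed

end
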